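(* Let $G$ be a group satisfying the law $[x^2,y^2]=1$ (i.e. $[g^2,h^2]=1$ for all $g,h\in G$), and suppose the Klein bottle group $K=\langle a,b\mid b^{-1}ab=a^{-1}\rangle$ is a subgroup of $G$. Then every element of the normal closure $\langle\langle b^2\rangle\rangle$ of $b^2$ in $G$ commutes with every element of $K$.
   Context: $[x,y]=x^{-1}y^{-1}xy$. The normal closure $\langle\langle X\rangle\rangle$ of a subset $X$ of $G$ is the smallest normal subgroup of $G$ containing $X$. *)

theory Defs
  imports "HOL-Algebra.Algebra"
begin

definition commutator :: "('a, 'b) monoid_scheme \<Rightarrow> 'a \<Rightarrow> 'a \<Rightarrow> 'a" where
  "commutator G x y = inv\<^bsub>G\<^esub> x \<otimes>\<^bsub>G\<^esub> inv\<^bsub>G\<^esub> y \<otimes>\<^bsub>G\<^esub> x \<otimes>\<^bsub>G\<^esub> y"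

definition normal_closure :: "('a, 'b) monoid_scheme \<Rightarrow> 'a set \<Rightarrow> 'a set" where
  "normal_closure Gr S = {x. \<forall>H. normal H Gr \<and> S \<subseteq> H \<longrightarrow> x \<in> H}"

text \<open>The Klein bottle group <a,b | b^-1 a b = a^-1>, realised concretely by its
  normal form a^m b^n, i.e. the semidirect product Z \<rtimes> Z on pairs (m,n) with
  (m,n)(m',n') = (m + (-1)^n m', n + n'); a = (1,0), b = (0,1).\<close>
definition klein_group :: "(int \<times> int) monoid" where
  "klein_group = \<lparr> carrier = UNIV,
     monoid.mult = (\<lambda>(m, n) (m', n'). (m + (if even n then m' else - m'), n + n')),
     one = (0, 0) \<rparr>"

definition klein_a :: "int \<times> int" where "klein_a = (1, 0)"
definition klein_b :: "int \<times> int" where "klein_b = (0, 1)"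

end

theory Submission
  imports Defs
begin

(* Because squares commute, x^2 commutes with every conjugate z x z^-1 = x^-1 (x z)^2 (z^-1)^2.
   In K the elements b and ab have the same square b^2, so b^2 commutes with every conjugate of
   b and of ab, hence of a, hence of every element of K.  Read the other way round, every
   conjugate of b^2 centralises K, and these conjugates generate the normal closure of b^2. *)

definition centralizer :: "('a, 'b) monoid_scheme \<Rightarrow> 'a set \<Rightarrow> 'a set" where
  "centralizer G A = {x \<in> carrier G. \<forall>a\<in>A. x \<otimes>\<^bsub>G\<^esub> a = a \<otimes>\<^bsub>G\<^esub> x}"

definition normal_core :: "('a, 'b) monoid_scheme \<Rightarrow> 'a set \<Rightarrow> 'a set" where
  "normal_core G H = {x \<in> carrier G. \<forall>g\<in>carrier G. g \<otimes>\<^bsub>G\<^esub> x \<otimes>\<^bsub>G\<^esub> inv\<^bsub>G\<^esub> g \<in> H}"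

context group
begin

lemma inv_mult_cancel [simp]:
  "x \<in> carrier G \<Longrightarrow> y \<in> carrier G \<Longrightarrow> inv x \<otimes> (x \<otimes> y) = y"
  by (simp flip: m_assoc)

lemma mult_inv_cancel [simp]:
  "x \<in> carrier G \<Longrightarrow> y \<in> carrier G \<Longrightarrow> x \<otimes> (inv x \<otimes> y) = y"
  by (simp flip: m_assoc)

lemma commutator_eq_one_iff:
  assumes "x \<in> carrier G" "y \<in> carrier G"
  shows "commutator G x y = \<one> \<longleftrightarrow> x \<otimes> y = y \<otimes> x"
proof -
  have "commutator G x y = inv (y \<otimes> x) \<otimes> (x \<otimes> y)"
    using assms by (simp add: commutator_def inv_mult_group m_assoc)
  then show ?thesis
    using assms by (simp add: inv_solve_left')
qed

lemma subgroup_centralizer: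
  assumes "A \<subseteq> carrier G"
  shows "subgroup (centralizer G A) G"
proof (rule subgroupI)
  fix x y assume x: "x \<in> centralizer G A" and y: "y \<in> centralizer G A"
  have "x \<otimes> y \<otimes> a = a \<otimes> (x \<otimes> y)" if a: "a \<in> A" for a
  proof -
    have xa: "x \<otimes> a = a \<otimes> x" and ya: "y \<otimes> a = a \<otimes> y"
      and c: "x \<in> carrier G" "y \<in> carrier G" "a \<in> carrier G"
      using x y a assms by (auto simp: centralizer_def)
    have "x \<otimes> y \<otimes> a = x \<otimes> (a \<otimes> y)" using c by (simp add: m_assoc ya)
    also have "\<dots> = a \<otimes> x \<otimes> y" using c by (simp add: xa flip: m_assoc)
    finally show ?thesis using c by (simp add: m_assoc)
  qed
  then show "x \<otimes> y \<in> centralizer G A"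
    using x y by (auto simp: centralizer_def)
  have "inv x \<otimes> a = a \<otimes> inv x" if a: "a \<in> A" for a
  proof -
    have xa: "x \<otimes> a = a \<otimes> x" and c: "x \<in> carrier G" "a \<in> carrier G"
      using x a assms by (auto simp: centralizer_def)
    have "a \<otimes> inv x = inv x \<otimes> (x \<otimes> a) \<otimes> inv x" using c by simp
    also have "\<dots> = inv x \<otimes> a" using c by (simp add: xa m_assoc)
    finally show ?thesis by simp
  qed
  then show "inv x \<in> centralizer G A"
    using x by (auto simp: centralizer_def)
qed (use assms in \<open>auto simp: centralizer_def intro!: exI[of _ \<one>]\<close>)

lemma normal_core_normal:
  assumes "subgroup H G"
  shows "normal_core G H \<lhd> G"
proof (rule normal_invI)
  show "subgroup (normal_core G H) G"
  proof (rule subgroupI)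
    fix x y assume x: "x \<in> normal_core G H" and y: "y \<in> normal_core G H"
    have "g \<otimes> (x \<otimes> y) \<otimes> inv g = (g \<otimes> x \<otimes> inv g) \<otimes> (g \<otimes> y \<otimes> inv g)" if "g \<in> carrier G" for g
      using x y that by (simp add: normal_core_def m_assoc)
    then show "x \<otimes> y \<in> normal_core G H"
      using x y assms by (auto simp: normal_core_def subgroup.m_closed)
    have "g \<otimes> inv x \<otimes> inv g = inv (g \<otimes> x \<otimes> inv g)" if "g \<in> carrier G" for g
      using x that by (simp add: normal_core_def inv_mult_group m_assoc)
    then show "inv x \<in> normal_core G H"
      using x assms by (auto simp: normal_core_def subgroup.m_inv_closed)
  qed (use assms in \<open>auto simp: normal_core_def subgroup.one_closed\<close>)
next
  fix x h assume x: "x \<in> carrier G" and h: "h \<in> normal_core G H"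
  have "g \<otimes> (x \<otimes> h \<otimes> inv x) \<otimes> inv g = (g \<otimes> x) \<otimes> h \<otimes> inv (g \<otimes> x)" if "g \<in> carrier G" for g
    using x h that by (simp add: normal_core_def m_assoc inv_mult_group)
  then show "x \<otimes> h \<otimes> inv x \<in> normal_core G H"
    using x h by (auto simp: normal_core_def)
qed

lemma normal_core_subset:
  assumes "H \<subseteq> carrier G"
  shows "normal_core G H \<subseteq> H"
  using assms by (auto simp: normal_core_def dest: bspec[where x = \<one>])

lemma conj_commute_iff:
  assumes "g \<in> carrier G" "x \<in> carrier G" "y \<in> carrier G"
  shows "(g \<otimes> x \<otimes> inv g) \<otimes> y = y \<otimes> (g \<otimes> x \<otimes> inv g)
     \<longleftrightarrow> x \<otimes> (inv g \<otimes> y \<otimes> g) = (inv g \<otimes> y \<otimes> g) \<otimes> x"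
proof -
  have "(g \<otimes> x \<otimes> inv g) \<otimes> y = g \<otimes> (x \<otimes> (inv g \<otimes> y \<otimes> g)) \<otimes> inv g"
   and "y \<otimes> (g \<otimes> x \<otimes> inv g) = g \<otimes> ((inv g \<otimes> y \<otimes> g) \<otimes> x) \<otimes> inv g"
    using assms by (simp_all add: m_assoc)
  then show ?thesis
    using assms by simp
qed

lemma normal_core_centralizer_iff:
  assumes x: "x \<in> carrier G" and A: "A \<subseteq> carrier G"
  shows "x \<in> normal_core G (centralizer G A) \<longleftrightarrow> A \<subseteq> normal_core G (centralizer G {x})"
proof -
  have conj: "(g \<otimes> x \<otimes> inv g) \<otimes> a = a \<otimes> (g \<otimes> x \<otimes> inv g)
      \<longleftrightarrow> x \<otimes> (h \<otimes> a \<otimes> inv h) = (h \<otimes> a \<otimes> inv h) \<otimes> x"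
    if "g \<in> carrier G" "a \<in> A" "h = inv g" for g h a
    using conj_commute_iff[of g x a] that x A by auto
  show ?thesis
  proof
    assume "x \<in> normal_core G (centralizer G A)"
    then have comm: "(g \<otimes> x \<otimes> inv g) \<otimes> a = a \<otimes> (g \<otimes> x \<otimes> inv g)"
      if "g \<in> carrier G" "a \<in> A" for g a
      using that by (auto simp: normal_core_def centralizer_def)
    have "x \<otimes> (h \<otimes> a \<otimes> inv h) = (h \<otimes> a \<otimes> inv h) \<otimes> x"
      if "h \<in> carrier G" "a \<in> A" for h a
      using comm[of "inv h" a] conj[of "inv h" a h] that by simp
    then show "A \<subseteq> normal_core G (centralizer G {x})"
      using x A by (auto simp: normal_core_def centralizer_def)
  next
    assume "A \<subseteq> normal_core G (centralizer G {x})"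
    then have comm: "x \<otimes> (h \<otimes> a \<otimes> inv h) = (h \<otimes> a \<otimes> inv h) \<otimes> x"
      if "h \<in> carrier G" "a \<in> A" for h a
      using that by (auto simp: normal_core_def centralizer_def)
    have "(g \<otimes> x \<otimes> inv g) \<otimes> a = a \<otimes> (g \<otimes> x \<otimes> inv g)"
      if "g \<in> carrier G" "a \<in> A" for g a
      using comm[of "inv g" a] conj[of g a "inv g"] that by simp
    then show "x \<in> normal_core G (centralizer G A)"
      using x by (auto simp: normal_core_def centralizer_def)
  qed
qed

lemma square_in_normal_core_centralizer:
  assumes squares_commute: "\<And>u v. u \<in> carrier G \<Longrightarrow> v \<in> carrier G \<Longrightarrow>
      u [^] (2::nat) \<otimes> v [^] (2::nat) = v [^] (2::nat) \<otimes> u [^] (2::nat)"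
    and x: "x \<in> carrier G"
  shows "x \<in> normal_core G (centralizer G {x [^] (2::nat)})"
proof -
  let ?C = "centralizer G {x [^] (2::nat)}"
  have C: "subgroup ?C G"
    using x by (intro subgroup_centralizer) simp
  have sq: "w [^] (2::nat) = w \<otimes> w" if "w \<in> carrier G" for w
    using that by (simp add: numeral_2_eq_2)
  have "x \<in> ?C"
    using x by (simp add: centralizer_def sq m_assoc)
  then have inv_x: "inv x \<in> ?C"
    using C by (rule subgroup.m_inv_closed[rotated])
  have "z \<otimes> x \<otimes> inv z \<in> ?C" if z: "z \<in> carrier G" for z
  proof -
    have "(x \<otimes> z) [^] (2::nat) \<in> ?C" "inv z [^] (2::nat) \<in> ?C"
      using squares_commute x z by (auto simp: centralizer_def)
    then have "inv x \<otimes> (x \<otimes> z) [^] (2::nat) \<otimes> inv z [^] (2::nat) \<in> ?C"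
      using inv_x C by (simp add: subgroup.m_closed)
    moreover have "inv x \<otimes> (x \<otimes> z) [^] (2::nat) \<otimes> inv z [^] (2::nat) = z \<otimes> x \<otimes> inv z"
      using x z by (simp add: sq m_assoc)
    ultimately show ?thesis by simp
  qed
  then show ?thesis
    using x by (simp add: normal_core_def)
qed

end

lemma carrier_klein_group [simp]: "carrier klein_group = UNIV"
  by (simp add: klein_group_def)

lemma one_klein_group [simp]: "\<one>\<^bsub>klein_group\<^esub> = (0, 0)"
  by (simp add: klein_group_def)

lemma mult_klein_group [simp]:
  "(m, n) \<otimes>\<^bsub>klein_group\<^esub> (m', n') = (m + (if even n then m' else - m'), n + n')"
  by (simp add: klein_group_def)

lemma group_klein_group: "group klein_group"
proof (rule groupI)
  fix x y z :: "int \<times> int"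
  show "x \<otimes>\<^bsub>klein_group\<^esub> y \<otimes>\<^bsub>klein_group\<^esub> z = x \<otimes>\<^bsub>klein_group\<^esub> (y \<otimes>\<^bsub>klein_group\<^esub> z)"
    by (cases x; cases y; cases z) auto
  obtain m n where "x = (m, n)"
    by fastforce
  then show "\<exists>y\<in>carrier klein_group. y \<otimes>\<^bsub>klein_group\<^esub> x = \<one>\<^bsub>klein_group\<^esub>"
    by (intro bexI[of _ "(if even n then - m else m, - n)"]) auto
qed auto

lemma inv_klein_group:
  "inv\<^bsub>klein_group\<^esub> (m, n) = (if even n then - m else m, - n)"
  by (rule group.inv_equality[OF group_klein_group]) auto

lemma klein_a_int_pow: "klein_a [^]\<^bsub>klein_group\<^esub> (k::int) = (k, 0)"
proof -
  have "klein_a [^]\<^bsub>klein_group\<^esub> (n::nat) = (int n, 0)" for n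
    by (induction n) (simp_all add: klein_a_def)
  then show ?thesis
    by (simp add: int_pow_def2 inv_klein_group)
qed

lemma klein_b_int_pow: "klein_b [^]\<^bsub>klein_group\<^esub> (k::int) = (0, k)"
proof -
  have "klein_b [^]\<^bsub>klein_group\<^esub> (n::nat) = (0, int n)" for n
    by (induction n) (simp_all add: klein_b_def)
  then show ?thesis
    by (simp add: int_pow_def2 inv_klein_group)
qed

lemma klein_normal_form:
  "(m, n) = klein_a [^]\<^bsub>klein_group\<^esub> m \<otimes>\<^bsub>klein_group\<^esub> klein_b [^]\<^bsub>klein_group\<^esub> n"
  by (simp add: klein_a_int_pow klein_b_int_pow)

lemma generate_klein_group: "generate klein_group {klein_a, klein_b} = carrier klein_group"
proof -
  interpret K: group klein_group
    by (rule group_klein_group)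
  have gen: "subgroup (generate klein_group {klein_a, klein_b}) klein_group"
    by (rule K.generate_is_subgroup) simp
  have "(m, n) \<in> generate klein_group {klein_a, klein_b}" for m n
    using klein_normal_form[of m n]
    by (metis gen K.subgroup_int_pow_closed generate.incl insertCI subgroup.m_closed)
  then show ?thesis
    by auto
qed

lemma klein_relation:
  "(klein_a \<otimes>\<^bsub>klein_group\<^esub> klein_b) [^]\<^bsub>klein_group\<^esub> (2::nat) = klein_b [^]\<^bsub>klein_group\<^esub> (2::nat)"
  by (simp add: klein_a_def klein_b_def numeral_2_eq_2)

context group
begin

lemma hom_klein_group_image_subset:
  assumes hom: "\<phi> \<in> hom klein_group G" and S: "subgroup S G"
    and "\<phi> klein_a \<in> S" "\<phi> klein_b \<in> S"
  shows "\<phi> ` carrier klein_group \<subseteq> S"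
proof -
  interpret \<phi>: group_hom klein_group G \<phi>
    using hom group_klein_group by (simp add: group_hom_def group_hom_axioms_def group_axioms)
  have "\<phi> ` carrier klein_group = generate G (\<phi> ` {klein_a, klein_b})"
    using \<phi>.generate_img[of "{klein_a, klein_b}"] generate_klein_group by simp
  also have "\<dots> \<subseteq> S"
    using assms by (intro generate_subgroup_incl) auto
  finally show ?thesis .
qed

lemma hom_klein_group_image_subset_normal_core:
  assumes squares_commute: "\<And>u v. u \<in> carrier G \<Longrightarrow> v \<in> carrier G \<Longrightarrow>
      u [^] (2::nat) \<otimes> v [^] (2::nat) = v [^] (2::nat) \<otimes> u [^] (2::nat)"
    and hom: "\<phi> \<in> hom klein_group G"
  shows "\<phi> ` carrier klein_group \<subseteq> normal_core G (centralizer G {\<phi> klein_b [^] (2::nat)})"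
    (is "_ \<subseteq> ?S")
proof -
  interpret \<phi>: group_hom klein_group G \<phi>
    using hom group_klein_group by (simp add: group_hom_def group_hom_axioms_def group_axioms)
  have S: "subgroup ?S G"
    by (intro normal_imp_subgroup normal_core_normal subgroup_centralizer) simp
  have b: "\<phi> klein_b \<in> ?S"
    using square_in_normal_core_centralizer[OF squares_commute] by simp
  have "(\<phi> klein_a \<otimes> \<phi> klein_b) [^] (2::nat)
      = \<phi> ((klein_a \<otimes>\<^bsub>klein_group\<^esub> klein_b) [^]\<^bsub>klein_group\<^esub> (2::nat))"
    by (simp add: \<phi>.hom_nat_pow)
  also have "\<dots> = \<phi> klein_b [^] (2::nat)"
    by (simp add: klein_relation \<phi>.hom_nat_pow)
  finally have ab: "\<phi> klein_a \<otimes> \<phi> klein_b \<in> ?S"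
    using square_in_normal_core_centralizer[OF squares_commute, of "\<phi> klein_a \<otimes> \<phi> klein_b"] by simp
  have "\<phi> klein_a = (\<phi> klein_a \<otimes> \<phi> klein_b) \<otimes> inv \<phi> klein_b"
    by (simp add: m_assoc)
  then have "\<phi> klein_a \<in> ?S"
    using ab b S by (metis subgroup.m_closed subgroup.m_inv_closed)
  then show ?thesis
    using hom_klein_group_image_subset[OF hom S] b by blast
qed

end

theorem mainTheorem4:
  fixes G (structure) and \<phi> :: "int \<times> int \<Rightarrow> 'a"
  assumes "group G"
    and law: "\<forall>g\<in>carrier G. \<forall>h\<in>carrier G. commutator G (g [^] (2::nat)) (h [^] (2::nat)) = \<one>"
    and hom: "\<phi> \<in> hom klein_group G"
    and inj: "inj_on \<phi> (carrier klein_group)"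
  shows "\<forall>x\<in>normal_closure G {\<phi> klein_b [^] (2::nat)}. \<forall>k\<in>\<phi> ` carrier klein_group.
           x \<otimes> k = k \<otimes> x"
proof -
  interpret group G by fact
  define b_sq where "b_sq = \<phi> klein_b [^] (2::nat)"
  let ?K = "\<phi> ` carrier klein_group"
  let ?N = "normal_core G (centralizer G ?K)"
  have K: "?K \<subseteq> carrier G" and "b_sq \<in> carrier G"
    using hom by (auto simp: b_sq_def hom_def)
  have "?K \<subseteq> normal_core G (centralizer G {b_sq})"
    unfolding b_sq_def using law hom
    by (intro hom_klein_group_image_subset_normal_core) (simp_all add: commutator_eq_one_iff)
  then have "b_sq \<in> ?N"
    using K \<open>b_sq \<in> carrier G\<close> by (simp add: normal_core_centralizer_iff)
  moreover have "?N \<lhd> G"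
    using K by (intro normal_core_normal subgroup_centralizer)
  ultimately have "normal_closure G {b_sq} \<subseteq> ?N"
    by (auto simp: normal_closure_def)
  also have "\<dots> \<subseteq> centralizer G ?K"
    by (rule normal_core_subset) (auto simp: centralizer_def)
  finally show ?thesis
    by (auto simp: b_sq_def centralizer_def)
qed

end
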